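(* Let $\mathbb{X}$ be a category with finite products. For pre-$\mathsf{D}$-sequences $f_\bullet:A\to B$, $g_\bullet:B\to C$, $g'_\bullet:A\to C$, in $\overline{\mathcal{D}}[\mathbb{X}]$: (i) $\mathsf{T}(f_\bullet)=\langle\pi_0\cdot f_\bullet,\mathsf{D}[f_\bullet]\rangle$; (ii) $\mathsf{D}[i_\bullet]=i_\bullet\cdot\pi_1$; (iii) $\mathsf{D}[i_\bullet\cdot\pi_j]=i_\bullet\cdot(\pi_1\pi_j)$ for $j\in\{0,1\}$; (iv) $\mathsf{D}[f_\bullet\ast g_\bullet]=\mathsf{T}(f_\bullet)\ast\mathsf{D}[g_\bullet]$; (v) $\mathsf{D}[\langle f_\bullet,g'_\bullet\rangle]=\langle\mathsf{D}[f_\bullet],\mathsf{D}[g'_\bullet]\rangle$.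
   Context: Composition in diagrammatic order. $\mathsf{P}(A)=A\times A$, $\mathsf{P}(f)=f\times f$. A pre-$\mathsf{D}$-sequence $f_\bullet:A\to B$ is $(f_n)_{n\ge0}$ with $f_n:\mathsf{P}^n(A)\to B$. For $h:A'\to A$, $k:B\to C$ in $\mathbb{X}$: $(h\cdot f_\bullet)_n=\mathsf{P}^n(h)f_n$, $(f_\bullet\cdot k)_n=f_nk$. Tangent $\mathsf{T}(f_\bullet):\mathsf{P}(A)\to\mathsf{P}(B)$, $\mathsf{T}(f_\bullet)_n=\langle\mathsf{P}^n(\pi_0)f_n,f_{n+1}\rangle$; differential $\mathsf{D}[f_\bullet]:\mathsf{P}(A)\to B$, $\mathsf{D}[f_\bullet]_n=f_{n+1}$. Identity $i_\bullet$: $i_0=1$, $i_n=\pi_1\cdots\pi_1$ ($n$ times). Composition $(f_\bullet\ast g_\bullet)_n=\mathsf{T}^n(f_\bullet)_0g_n$. Pairing $\langle f_\bullet,g_\bullet\rangle_n=\langle f_n,g_n\rangle$. In (i), $\pi_0:\mathsf{P}(A)\to A$; in (iii), $\pi_j:A_0\times A_1\to A_j$ and $\pi_1:\mathsf{P}(A_0\times A_1)\to A_0\times A_1$. *)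

theory Defs
  imports Main
begin

text \<open>A category with (chosen) finite products. Composition is written in
diagrammatic order: cmp f g means first f, then g.\<close>

record ('o, 'a) fpcat =
  arr :: "'a \<Rightarrow> bool"
  cdom :: "'a \<Rightarrow> 'o"
  ccod :: "'a \<Rightarrow> 'o"
  cmp :: "'a \<Rightarrow> 'a \<Rightarrow> 'a"
  idt :: "'o \<Rightarrow> 'a"
  prd :: "'o \<Rightarrow> 'o \<Rightarrow> 'o"
  pr0 :: "'o \<Rightarrow> 'o \<Rightarrow> 'a"
  pr1 :: "'o \<Rightarrow> 'o \<Rightarrow> 'a"

definition hom :: "('o, 'a, 'm) fpcat_scheme \<Rightarrow> 'o \<Rightarrow> 'o \<Rightarrow> 'a set" where
  "hom C X Y = {f. arr C f \<and> cdom C f = X \<and> ccod C f = Y}"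

definition cat_fp :: "('o, 'a, 'm) fpcat_scheme \<Rightarrow> bool" where
  "cat_fp C \<longleftrightarrow>
     (\<forall>X. idt C X \<in> hom C X X)
   \<and> (\<forall>f g. arr C f \<and> arr C g \<and> ccod C f = cdom C g \<longrightarrow>
        cmp C f g \<in> hom C (cdom C f) (ccod C g))
   \<and> (\<forall>f. arr C f \<longrightarrow> cmp C (idt C (cdom C f)) f = f \<and> cmp C f (idt C (ccod C f)) = f)
   \<and> (\<forall>f g h. arr C f \<and> arr C g \<and> arr C h \<and> ccod C f = cdom C g \<and> ccod C g = cdom C h \<longrightarrow>
        cmp C (cmp C f g) h = cmp C f (cmp C g h))
   \<and> (\<forall>X Y. pr0 C X Y \<in> hom C (prd C X Y) X \<and> pr1 C X Y \<in> hom C (prd C X Y) Y)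
   \<and> (\<forall>f g. arr C f \<and> arr C g \<and> cdom C f = cdom C g \<longrightarrow>
        (\<exists>!h. h \<in> hom C (cdom C f) (prd C (ccod C f) (ccod C g))
             \<and> cmp C h (pr0 C (ccod C f) (ccod C g)) = f
             \<and> cmp C h (pr1 C (ccod C f) (ccod C g)) = g))
   \<and> (\<exists>T. \<forall>X. \<exists>!h. h \<in> hom C X T)"

definition pair :: "('o, 'a, 'm) fpcat_scheme \<Rightarrow> 'a \<Rightarrow> 'a \<Rightarrow> 'a" where
  "pair C f g = (THE h. h \<in> hom C (cdom C f) (prd C (ccod C f) (ccod C g))
             \<and> cmp C h (pr0 C (ccod C f) (ccod C g)) = f
             \<and> cmp C h (pr1 C (ccod C f) (ccod C g)) = g)"

definition Pob :: "('o, 'a, 'm) fpcat_scheme \<Rightarrow> 'o \<Rightarrow> 'o" where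
  "Pob C X = prd C X X"

definition Parr :: "('o, 'a, 'm) fpcat_scheme \<Rightarrow> 'a \<Rightarrow> 'a" where
  "Parr C f = pair C (cmp C (pr0 C (cdom C f) (cdom C f)) f) (cmp C (pr1 C (cdom C f) (cdom C f)) f)"

definition pre_D_seq :: "('o, 'a, 'm) fpcat_scheme \<Rightarrow> 'o \<Rightarrow> 'o \<Rightarrow> (nat \<Rightarrow> 'a) \<Rightarrow> bool" where
  "pre_D_seq C A B f \<longleftrightarrow> (\<forall>n. f n \<in> hom C ((Pob C ^^ n) A) B)"

definition lact :: "('o, 'a, 'm) fpcat_scheme \<Rightarrow> 'a \<Rightarrow> (nat \<Rightarrow> 'a) \<Rightarrow> nat \<Rightarrow> 'a" where
  "lact C h f n = cmp C ((Parr C ^^ n) h) (f n)"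

definition ract :: "('o, 'a, 'm) fpcat_scheme \<Rightarrow> (nat \<Rightarrow> 'a) \<Rightarrow> 'a \<Rightarrow> nat \<Rightarrow> 'a" where
  "ract C f k n = cmp C (f n) k"

definition tang :: "('o, 'a, 'm) fpcat_scheme \<Rightarrow> 'o \<Rightarrow> (nat \<Rightarrow> 'a) \<Rightarrow> nat \<Rightarrow> 'a" where
  "tang C A f n = pair C (cmp C ((Parr C ^^ n) (pr0 C A A)) (f n)) (f (Suc n))"

fun tangpow :: "('o, 'a, 'm) fpcat_scheme \<Rightarrow> 'o \<Rightarrow> (nat \<Rightarrow> 'a) \<Rightarrow> nat \<Rightarrow> nat \<Rightarrow> 'a" where
  "tangpow C A f 0 = f"
| "tangpow C A f (Suc n) = tang C ((Pob C ^^ n) A) (tangpow C A f n)"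

definition Dseq :: "(nat \<Rightarrow> 'a) \<Rightarrow> nat \<Rightarrow> 'a" where
  "Dseq f n = f (Suc n)"

fun idseq :: "('o, 'a, 'm) fpcat_scheme \<Rightarrow> 'o \<Rightarrow> nat \<Rightarrow> 'a" where
  "idseq C A 0 = idt C A"
| "idseq C A (Suc n) = cmp C (pr1 C ((Pob C ^^ n) A) ((Pob C ^^ n) A)) (idseq C A n)"

definition seqcomp :: "('o, 'a, 'm) fpcat_scheme \<Rightarrow> 'o \<Rightarrow> (nat \<Rightarrow> 'a) \<Rightarrow> (nat \<Rightarrow> 'a) \<Rightarrow> nat \<Rightarrow> 'a" where
  "seqcomp C A f g n = cmp C (tangpow C A f n 0) (g n)"

definition seqpair :: "('o, 'a, 'm) fpcat_scheme \<Rightarrow> (nat \<Rightarrow> 'a) \<Rightarrow> (nat \<Rightarrow> 'a) \<Rightarrow> nat \<Rightarrow> 'a" where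
  "seqpair C f g n = pair C (f n) (g n)"

end

theory Submission
  imports Defs
begin

text \<open>Items (i), (iv) and (v) merely unfold the definitions; for (iv) the one observation is that
  the iterated tangent satisfies T^(n+1)(f) = T^n(T(f)). The content lies in (ii): by induction,
  associativity moves the outermost projection of i_(n+1) = \<pi>_1 i_n to the inside, giving
  i_(n+1) = i'_n \<pi>_1 with i' the identity sequence of P(A). Item (iii), for an arbitrary
  arrow k in place of \<pi>_j, then follows from (ii) since D commutes with the right action and
  the right action is associative.\<close>

lemma Pob_funpow_Suc: "(Pob C ^^ n) (Pob C A) = (Pob C ^^ Suc n) A"
  by (simp add: funpow_swap1)

lemma tangpow_Suc_tang: "tangpow C A f (Suc n) = tangpow C (Pob C A) (tang C A f) n"
  by (induction n) (simp_all add: Pob_funpow_Suc del: funpow.simps)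

lemma tang_eq_seqpair: "tang C A f = seqpair C (lact C (pr0 C A A) f) (Dseq f)"
  by (simp add: fun_eq_iff tang_def seqpair_def lact_def Dseq_def)

lemma Dseq_seqcomp: "Dseq (seqcomp C A f g) = seqcomp C (Pob C A) (tang C A f) (Dseq g)"
  by (simp add: fun_eq_iff Dseq_def seqcomp_def tangpow_Suc_tang del: tangpow.simps)

lemma Dseq_seqpair: "Dseq (seqpair C f g) = seqpair C (Dseq f) (Dseq g)"
  by (simp add: fun_eq_iff Dseq_def seqpair_def)

lemma Dseq_ract: "Dseq (ract C f k) = ract C (Dseq f) k"
  by (simp add: fun_eq_iff Dseq_def ract_def)

context
  fixes C :: "('o, 'a, 'm) fpcat_scheme"
  assumes C: "cat_fp C"
begin

lemma idt_hom: "idt C X \<in> hom C X X"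
  using C unfolding cat_fp_def by (elim conjE) blast

lemma cmp_hom: "f \<in> hom C X Y \<Longrightarrow> g \<in> hom C Y Z \<Longrightarrow> cmp C f g \<in> hom C X Z"
  using C unfolding cat_fp_def by (elim conjE) (simp add: hom_def)

lemma cmp_idt:
  assumes "f \<in> hom C X Y"
  shows cmp_idt_left: "cmp C (idt C X) f = f" and cmp_idt_right: "cmp C f (idt C Y) = f"
proof -
  have "\<forall>f. arr C f \<longrightarrow> cmp C (idt C (cdom C f)) f = f \<and> cmp C f (idt C (ccod C f)) = f"
    using C unfolding cat_fp_def by (elim conjE)
  with assms show "cmp C (idt C X) f = f" "cmp C f (idt C Y) = f"
    by (auto simp: hom_def)
qed

lemma cmp_assoc:
  "f \<in> hom C X Y \<Longrightarrow> g \<in> hom C Y Z \<Longrightarrow> h \<in> hom C Z W \<Longrightarrow>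
    cmp C (cmp C f g) h = cmp C f (cmp C g h)"
  using C unfolding cat_fp_def by (elim conjE) (simp add: hom_def)

lemma pr0_hom: "pr0 C X Y \<in> hom C (prd C X Y) X"
  using C unfolding cat_fp_def by (elim conjE) blast

lemma pr1_hom: "pr1 C X Y \<in> hom C (prd C X Y) Y"
  using C unfolding cat_fp_def by (elim conjE) blast

lemma pr1_hom_Pob: "pr1 C X X \<in> hom C (Pob C X) X"
  using pr1_hom by (simp add: Pob_def)

lemma ract_ract:
  assumes "pre_D_seq C A B f" and "h \<in> hom C B B'" and "k \<in> hom C B' B''"
  shows "ract C (ract C f h) k = ract C f (cmp C h k)"
proof
  fix n
  have "f n \<in> hom C ((Pob C ^^ n) A) B"
    using assms(1) by (simp add: pre_D_seq_def)
  then show "ract C (ract C f h) k n = ract C f (cmp C h k) n"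
    using cmp_assoc assms(2,3) by (simp add: ract_def)
qed

lemma pre_D_seq_idseq: "pre_D_seq C A A (idseq C A)"
  unfolding pre_D_seq_def
proof
  fix n
  show "idseq C A n \<in> hom C ((Pob C ^^ n) A) A"
  proof (induction n)
    case 0
    show ?case using idt_hom by simp
  next
    case (Suc n)
    then show ?case
      using cmp_hom[OF pr1_hom_Pob] by simp
  qed
qed

lemma idseq_Suc_eq: "idseq C A (Suc n) = cmp C (idseq C (Pob C A) n) (pr1 C A A)"
proof (induction n)
  case 0
  show ?case
    using cmp_idt_left[OF pr1_hom_Pob] cmp_idt_right[OF pr1_hom_Pob] by (simp add: Pob_def)
next
  case (Suc n)
  let ?Y = "(Pob C ^^ Suc n) A"
  have i: "idseq C (Pob C A) n \<in> hom C ?Y (Pob C A)"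
    using pre_D_seq_idseq[of "Pob C A"] by (simp add: pre_D_seq_def Pob_funpow_Suc)
  have "idseq C A (Suc (Suc n)) = cmp C (pr1 C ?Y ?Y) (cmp C (idseq C (Pob C A) n) (pr1 C A A))"
    using Suc by simp
  also have "\<dots> = cmp C (cmp C (pr1 C ?Y ?Y) (idseq C (Pob C A) n)) (pr1 C A A)"
    using cmp_assoc[OF pr1_hom_Pob i pr1_hom_Pob] by simp
  also have "\<dots> = cmp C (idseq C (Pob C A) (Suc n)) (pr1 C A A)"
    by (simp add: Pob_funpow_Suc del: funpow.simps)
  finally show ?case .
qed

lemma Dseq_idseq: "Dseq (idseq C A) = ract C (idseq C (Pob C A)) (pr1 C A A)"
  by (simp add: fun_eq_iff Dseq_def ract_def idseq_Suc_eq del: idseq.simps)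

lemma Dseq_ract_idseq:
  assumes "k \<in> hom C A B"
  shows "Dseq (ract C (idseq C A) k) = ract C (idseq C (Pob C A)) (cmp C (pr1 C A A) k)"
  using ract_ract[OF pre_D_seq_idseq pr1_hom_Pob assms] by (simp add: Dseq_ract Dseq_idseq)

end

theorem proposition3p12:
  fixes C :: "('o, 'a, 'm) fpcat_scheme"
    and A B Z A0 A1 :: 'o
    and f g g' :: "nat \<Rightarrow> 'a"
  assumes "cat_fp C"
    and "pre_D_seq C A B f"
    and "pre_D_seq C B Z g"
    and "pre_D_seq C A Z g'"
  shows "tang C A f = seqpair C (lact C (pr0 C A A) f) (Dseq f)
    \<and> Dseq (idseq C A) = ract C (idseq C (Pob C A)) (pr1 C A A)
    \<and> Dseq (ract C (idseq C (prd C A0 A1)) (pr0 C A0 A1))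
        = ract C (idseq C (Pob C (prd C A0 A1)))
            (cmp C (pr1 C (prd C A0 A1) (prd C A0 A1)) (pr0 C A0 A1))
    \<and> Dseq (ract C (idseq C (prd C A0 A1)) (pr1 C A0 A1))
        = ract C (idseq C (Pob C (prd C A0 A1)))
            (cmp C (pr1 C (prd C A0 A1) (prd C A0 A1)) (pr1 C A0 A1))
    \<and> Dseq (seqcomp C A f g) = seqcomp C (Pob C A) (tang C A f) (Dseq g)
    \<and> Dseq (seqpair C f g') = seqpair C (Dseq f) (Dseq g')"
  using tang_eq_seqpair Dseq_idseq[OF assms(1)]
    Dseq_ract_idseq[OF assms(1) pr0_hom[OF assms(1)]]
    Dseq_ract_idseq[OF assms(1) pr1_hom[OF assms(1)]]
    Dseq_seqcomp Dseq_seqpair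
  by (intro conjI)

end
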